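(* Let $A\in\mathbb{R}^{n\times n}$ have all rows of Euclidean norm $1$. Then the matrix $$B=\frac{1}{\sqrt{\beta(A)^2+1}}\begin{bmatrix}\beta(A)\,A & I_n\\ \beta(A)\,A & -I_n\end{bmatrix}\in\mathbb{R}^{2n\times 2n}$$ has all rows of Euclidean norm $1$ and satisfies $\beta(B)=\sqrt{\beta(A)^2+1}$.
   Context: For $A\in\mathbb{R}^{m\times n}$, $\beta(A)=\frac{1}{2^n}\sum_{x\in\{-1,1\}^n}\|Ax\|_\infty$. $I_n$ is the $n\times n$ identity matrix. *)

theory Defs
  imports "HOL-Analysis.Analysis"
begin

text \<open>Matrices of size m x n are represented as functions nat => nat => real,
  only the entries with row index < m and column index < n being relevant.
  Sign vectors in {-1,1}^n are the extensional functions in PiE {..<n} (\<lambda>_. {-1,1}).\<close>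

definition inf_norm_vec :: "nat \<Rightarrow> (nat \<Rightarrow> real) \<Rightarrow> real" where
  "inf_norm_vec m y = Max (insert 0 ((\<lambda>i. \<bar>y i\<bar>) ` {..<m}))"

definition mat_vec :: "nat \<Rightarrow> (nat \<Rightarrow> nat \<Rightarrow> real) \<Rightarrow> (nat \<Rightarrow> real) \<Rightarrow> (nat \<Rightarrow> real)" where
  "mat_vec n A x = (\<lambda>i. \<Sum>j<n. A i j * x j)"

definition beta :: "nat \<Rightarrow> nat \<Rightarrow> (nat \<Rightarrow> nat \<Rightarrow> real) \<Rightarrow> real" where
  "beta m n A = (\<Sum>x\<in>PiE {..<n} (\<lambda>_. {-1, 1::real}). inf_norm_vec m (mat_vec n A x)) / 2 ^ n"

definition row_norm :: "nat \<Rightarrow> (nat \<Rightarrow> nat \<Rightarrow> real) \<Rightarrow> nat \<Rightarrow> real" where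
  "row_norm n A i = sqrt (\<Sum>j<n. (A i j)\<^sup>2)"

definition blockB :: "nat \<Rightarrow> (nat \<Rightarrow> nat \<Rightarrow> real) \<Rightarrow> (nat \<Rightarrow> nat \<Rightarrow> real)" where
  "blockB n A = (let b = beta n n A in
     (\<lambda>i j. (1 / sqrt (b\<^sup>2 + 1)) *
       (if i < n then
          (if j < n then b * A i j else (if j - n = i then 1 else 0))
        else
          (if j < n then b * A (i - n) j else (if j - n = i - n then -1 else 0)))))"

end

theory Submission
  imports Defs
begin

text \<open>Write \<open>b = \<beta>(A)\<close> and \<open>c = 1 / sqrt (b\<^sup>2 + 1)\<close>. Each row of \<open>B\<close> consists of \<open>c b\<close> times a
  row of \<open>A\<close> and a single entry \<open>\<plusminus>c\<close>, so its squared norm is \<open>c\<^sup>2 (b\<^sup>2 + 1) = 1\<close>.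
  For a sign vector \<open>x = (u, v)\<close> the two halves of \<open>B x\<close> are \<open>c (b A u + v)\<close> and \<open>c (b A u - v)\<close>;
  since every \<open>v\<^sub>k = \<plusminus>1\<close>, one of \<open>\<bar>t + v\<^sub>k\<bar>\<close>, \<open>\<bar>t - v\<^sub>k\<bar>\<close> equals \<open>\<bar>t\<bar> + 1\<close>, whence
  \<open>\<parallel>B x\<parallel>\<^sub>\<infinity> = c (b \<parallel>A u\<parallel>\<^sub>\<infinity> + 1)\<close>. Averaging over \<open>x\<close> gives
  \<open>\<beta>(B) = c (b \<beta>(A) + 1) = c (b\<^sup>2 + 1) = sqrt (b\<^sup>2 + 1)\<close>.\<close>

lemma sum_lessThan_add:
  fixes f :: "nat \<Rightarrow> 'a::comm_monoid_add"
  shows "(\<Sum>j<n + m. f j) = (\<Sum>j<n. f j) + (\<Sum>j<m. f (n + j))"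
  by (induction m) (simp_all add: add.assoc)

lemma less_double_cases:
  fixes i n :: nat
  assumes "i < 2 * n"
  obtains (upper) "i < n" | (lower) k where "k < n" "i = n + k"
  using assms by (metis add_diff_inverse_nat add_less_imp_less_left mult_2 not_less)

lemma sum_PiE_signs_extend:
  fixes F :: "(nat \<Rightarrow> real) \<Rightarrow> 'a::comm_semiring_1"
  assumes "\<And>x x'. (\<forall>j<n. x j = x' j) \<Longrightarrow> F x = F x'"
  shows "(\<Sum>x\<in>PiE {..<n + k} (\<lambda>_. {-1, 1}). F x) = 2 ^ k * (\<Sum>x\<in>PiE {..<n} (\<lambda>_. {-1, 1}). F x)"
proof (induction k)
  case 0
  then show ?case by simp
next
  case (Suc k)
  let ?S = "\<lambda>_::nat. {-1, 1::real}"
  let ?upd = "\<lambda>(y, g). g(n + k := y)"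
  have "{..<n + Suc k} = insert (n + k) {..<n + k}"
    by auto
  then have "(\<Sum>x\<in>PiE {..<n + Suc k} ?S. F x) = (\<Sum>x\<in>?upd ` (?S (n + k) \<times> PiE {..<n + k} ?S). F x)"
    by (simp only: PiE_insert_eq)
  also have "\<dots> = (\<Sum>p\<in>?S (n + k) \<times> PiE {..<n + k} ?S. F (?upd p))"
    by (subst sum.reindex[OF inj_combinator]) (simp_all add: comp_def)
  also have "\<dots> = (\<Sum>(y, g)\<in>?S (n + k) \<times> PiE {..<n + k} ?S. F g)"
  proof (intro sum.cong refl, clarify)
    fix y and g :: "nat \<Rightarrow> real"
    show "F (g(n + k := y)) = F g"
      by (rule assms) simp
  qed
  also have "\<dots> = 2 * (\<Sum>g\<in>PiE {..<n + k} ?S. F g)"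
    by (simp only: sum.cartesian_product[symmetric] sum_constant) simp
  finally show ?case
    using Suc by (simp add: mult.assoc)
qed

lemma inf_norm_vec_nonneg: "0 \<le> inf_norm_vec m y"
  unfolding inf_norm_vec_def by (rule Max_ge) auto

lemma abs_le_inf_norm_vec: "i < m \<Longrightarrow> \<bar>y i\<bar> \<le> inf_norm_vec m y"
  unfolding inf_norm_vec_def by (rule Max_ge) auto

lemma inf_norm_vec_attained:
  assumes "m \<ge> 1"
  obtains i where "i < m" "inf_norm_vec m y = \<bar>y i\<bar>"
proof -
  have "inf_norm_vec m y \<in> insert 0 ((\<lambda>i. \<bar>y i\<bar>) ` {..<m})"
    unfolding inf_norm_vec_def by (rule Max_in) auto
  moreover have "\<bar>y 0\<bar> \<le> inf_norm_vec m y"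
    using assms by (intro abs_le_inf_norm_vec) simp
  ultimately show thesis
    using that assms by (cases "inf_norm_vec m y = 0") force+
qed

lemma inf_norm_vec_eqI:
  assumes "\<And>i. i < m \<Longrightarrow> \<bar>y i\<bar> \<le> M" and "i < m" and "\<bar>y i\<bar> = M"
  shows "inf_norm_vec m y = M"
  unfolding inf_norm_vec_def using assms by (intro Max_eqI) auto

lemma inf_norm_vec_scale:
  assumes "0 \<le> c"
  shows "inf_norm_vec m (\<lambda>i. c * y i) = c * inf_norm_vec m y"
proof (cases "m = 0")
  case True
  then show ?thesis by (simp add: inf_norm_vec_def)
next
  case False
  then obtain i where "i < m" "inf_norm_vec m y = \<bar>y i\<bar>"
    using inf_norm_vec_attained[of m y] by auto
  moreover have "c * \<bar>y j\<bar> \<le> c * inf_norm_vec m y" if "j < m" for j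
    using assms that by (intro mult_left_mono abs_le_inf_norm_vec)
  ultimately show ?thesis
    using assms by (intro inf_norm_vec_eqI[of m _ _ i]) (auto simp: abs_mult)
qed

lemma inf_norm_vec_stack_pm:
  fixes y v z :: "nat \<Rightarrow> real"
  assumes "n \<ge> 1"
    and abs_v: "\<And>k. k < n \<Longrightarrow> \<bar>v k\<bar> = d"
    and z_upper: "\<And>k. k < n \<Longrightarrow> z k = y k + v k"
    and z_lower: "\<And>k. k < n \<Longrightarrow> z (n + k) = y k - v k"
  shows "inf_norm_vec (2 * n) z = inf_norm_vec n y + d"
proof -
  have bound: "\<bar>z i\<bar> \<le> inf_norm_vec n y + d" if "i < 2 * n" for i
    using that
  proof (cases rule: less_double_cases)
    case upper
    with abs_le_inf_norm_vec[of i n y] show ?thesis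
      using abs_v z_upper by fastforce
  next
    case (lower k)
    with abs_le_inf_norm_vec[of k n y] show ?thesis
      using abs_v z_lower by fastforce
  qed
  obtain k where k: "k < n" "inf_norm_vec n y = \<bar>y k\<bar>"
    using inf_norm_vec_attained[OF \<open>n \<ge> 1\<close>] by blast
  have "\<bar>y k + v k\<bar> = \<bar>y k\<bar> + d \<or> \<bar>y k - v k\<bar> = \<bar>y k\<bar> + d"
    using abs_v[OF k(1)] by arith
  then show ?thesis
  proof
    assume "\<bar>y k + v k\<bar> = \<bar>y k\<bar> + d"
    then show ?thesis
      using k z_upper by (intro inf_norm_vec_eqI[of _ _ _ k] bound) auto
  next
    assume "\<bar>y k - v k\<bar> = \<bar>y k\<bar> + d"
    then show ?thesis
      using k z_lower by (intro inf_norm_vec_eqI[of _ _ _ "n + k"] bound) auto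
  qed
qed

lemma beta_nonneg: "0 \<le> beta m n A"
  unfolding beta_def by (intro divide_nonneg_pos sum_nonneg inf_norm_vec_nonneg) auto

lemma blockB_blocks:
  fixes n :: nat and A :: "nat \<Rightarrow> nat \<Rightarrow> real"
  defines "c \<equiv> 1 / sqrt ((beta n n A)\<^sup>2 + 1)"
  assumes "i < n" and "j < n"
  shows "blockB n A i j = c * beta n n A * A i j"
    and "blockB n A i (n + j) = (if i = j then c else 0)"
    and "blockB n A (n + i) j = c * beta n n A * A i j"
    and "blockB n A (n + i) (n + j) = (if i = j then - c else 0)"
  using assms by (auto simp: blockB_def c_def Let_def)

lemma row_norm_blockB:
  assumes "\<forall>i<n. row_norm n A i = 1" and "i < 2 * n"
  shows "row_norm (2 * n) (blockB n A) i = 1"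
proof -
  define b where "b = beta n n A"
  define c where "c = 1 / sqrt (b\<^sup>2 + 1)"
  have "0 < b\<^sup>2 + 1"
    by (simp add: add_nonneg_pos)
  then have c_sq: "c\<^sup>2 * (b\<^sup>2 + 1) = 1"
    unfolding c_def by (simp add: power_divide)
  have row_sq: "(\<Sum>j<n. (A k j)\<^sup>2) = 1" if "k < n" for k
    using assms(1) that by (simp add: row_norm_def)
  have "(\<Sum>j<2 * n. (blockB n A i j)\<^sup>2) = c\<^sup>2 * b\<^sup>2 * (\<Sum>j<n. (A k j)\<^sup>2) + c\<^sup>2"
    if "k < n" and "i = k \<or> i = n + k" for k
  proof -
    have "(\<Sum>j<n. (blockB n A i j)\<^sup>2) = c\<^sup>2 * b\<^sup>2 * (\<Sum>j<n. (A k j)\<^sup>2)"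
      using that by (auto simp: blockB_blocks[where n = n and A = A, folded b_def, folded c_def] sum_distrib_left power_mult_distrib)
    moreover have "(\<Sum>j<n. (blockB n A i (n + j))\<^sup>2) = c\<^sup>2"
      using that by (auto simp: blockB_blocks[where n = n and A = A, folded b_def, folded c_def] if_distrib if_distribR cong: if_cong)
    ultimately show ?thesis
      by (simp add: mult_2 sum_lessThan_add)
  qed
  moreover obtain k where "k < n" "i = k \<or> i = n + k"
    using \<open>i < 2 * n\<close> by (cases rule: less_double_cases) auto
  ultimately have "(\<Sum>j<2 * n. (blockB n A i j)\<^sup>2) = 1"
    using row_sq c_sq by (simp add: algebra_simps)
  then show ?thesis
    by (simp add: row_norm_def)
qed

lemma mat_vec_blockB:
  fixes n :: nat and A :: "nat \<Rightarrow> nat \<Rightarrow> real"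
  defines "c \<equiv> 1 / sqrt ((beta n n A)\<^sup>2 + 1)"
  assumes "k < n"
  shows "mat_vec (2 * n) (blockB n A) x k = c * beta n n A * mat_vec n A x k + c * x (n + k)"
    and "mat_vec (2 * n) (blockB n A) x (n + k) = c * beta n n A * mat_vec n A x k - c * x (n + k)"
  using assms
  by (simp_all add: mat_vec_def mult_2 sum_lessThan_add blockB_blocks if_distrib if_distribR sum_distrib_left
      mult.assoc cong: if_cong)

lemma inf_norm_mat_vec_blockB:
  fixes n :: nat and A :: "nat \<Rightarrow> nat \<Rightarrow> real"
  defines "c \<equiv> 1 / sqrt ((beta n n A)\<^sup>2 + 1)"
  assumes "n \<ge> 1" and x: "x \<in> PiE {..<2 * n} (\<lambda>_. {-1, 1})"
  shows "inf_norm_vec (2 * n) (mat_vec (2 * n) (blockB n A) x)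
       = c * beta n n A * inf_norm_vec n (mat_vec n A x) + c"
proof -
  have "0 \<le> c * beta n n A"
    unfolding c_def by (simp add: beta_nonneg)
  have "\<bar>c * x (n + k)\<bar> = c" if "k < n" for k
  proof -
    have "x (n + k) \<in> {-1, 1}"
      using x that by (auto simp: PiE_iff)
    then show ?thesis
      by (auto simp: c_def abs_mult)
  qed
  then have "inf_norm_vec (2 * n) (mat_vec (2 * n) (blockB n A) x)
      = inf_norm_vec n (\<lambda>k. c * beta n n A * mat_vec n A x k) + c"
    by (intro inf_norm_vec_stack_pm \<open>n \<ge> 1\<close>)
      (simp_all add: mat_vec_blockB[where n = n and A = A, folded c_def])
  also have "\<dots> = c * beta n n A * inf_norm_vec n (mat_vec n A x) + c"
    using \<open>0 \<le> c * beta n n A\<close> by (simp add: inf_norm_vec_scale)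
  finally show ?thesis .
qed

lemma beta_blockB:
  assumes "n \<ge> 1"
  shows "beta (2 * n) (2 * n) (blockB n A) = sqrt ((beta n n A)\<^sup>2 + 1)"
proof -
  define b where "b = beta n n A"
  define c where "c = 1 / sqrt (b\<^sup>2 + 1)"
  define F where "F x = inf_norm_vec n (mat_vec n A x)" for x
  let ?P = "\<lambda>m. PiE {..<m} (\<lambda>_. {-1, 1::real})"
  have F_local: "F x = F x'" if "\<forall>j<n. x j = x' j" for x x'
    using that by (simp add: F_def mat_vec_def)
  have sum_F: "(\<Sum>x\<in>?P n. F x) = 2 ^ n * b"
    by (simp add: b_def beta_def F_def)
  have card_P: "card (?P n) = 2 ^ n"
    by (simp add: card_PiE numeral_2_eq_2)
  have "beta (2 * n) (2 * n) (blockB n A) = (\<Sum>x\<in>?P (n + n). c * b * F x + c) / 2 ^ (n + n)"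
    unfolding beta_def mult_2
    using inf_norm_mat_vec_blockB[OF assms, where A = A, folded b_def, folded c_def]
    by (simp add: F_def mult_2 cong: sum.cong)
  also have "\<dots> = 2 ^ n * (\<Sum>x\<in>?P n. c * b * F x + c) / 2 ^ (n + n)"
    using F_local by (subst sum_PiE_signs_extend) auto
  also have "\<dots> = c * (b\<^sup>2 + 1)"
    by (simp add: sum.distrib sum_distrib_left[symmetric] sum_F card_P power_add power2_eq_square
        field_simps)
  also have "\<dots> = sqrt (b\<^sup>2 + 1)"
    unfolding c_def by (simp add: real_div_sqrt add_nonneg_pos)
  finally show ?thesis
    unfolding b_def .
qed

theorem theorem2:
  fixes n :: nat and A :: "nat \<Rightarrow> nat \<Rightarrow> real"
  assumes "n \<ge> 1"
    and "\<forall>i<n. row_norm n A i = 1"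
  shows "(\<forall>i<2*n. row_norm (2*n) (blockB n A) i = 1)
       \<and> beta (2*n) (2*n) (blockB n A) = sqrt ((beta n n A)\<^sup>2 + 1)"
  using assms row_norm_blockB beta_blockB by blast

end
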